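(* Let $(X_t)_{t\ge1}$ be i.i.d. from a non-degenerate distribution $P$ on $[0,1]$ with mean $\mu$, and set $\widehat X_t=t^{-1}(1/2+\sum_{i<t}X_i)$. Fix $\kappa>0$ and $\alpha\in(0,1)$, and let $Z$, $U_t$ and $W_t^{\mathrm{apx}}$ be defined with this choice of $\widehat X_t$. Let $u:=\mathbb{E}_P[\psi_E(|X-\mu|)]$, where $X\sim P$; this $u$ lies in $(0,\infty)$. Set \[ A_t^{\mathrm{apx}}:=\sqrt{\frac{2u\log t}{t}}. \] Then $W_t^{\mathrm{apx}}/A_t^{\mathrm{apx}}\to1$ almost surely. More precisely, $R_t:=W_t^{\mathrm{apx}}/A_t^{\mathrm{apx}}$ satisfies, for $t\ge2$, \[ R_t^2=\frac{2U_t}{t\,u}\left(\frac{\log(1/\alpha)}{\log t}+\frac12+\varepsilon_t\right), \] where $\varepsilon_t\to0$ almost surely.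
   Context: $\psi_E(x)=-\log(1-x)-x$ for $x\in[0,1)$. $\Phi$ is the standard normal CDF and $Z=\Phi(1/\kappa)-\Phi(-1/\kappa)$. Further, $U_t=(2\kappa^2)^{-1}+\sum_{i\le t}\psi_E(|X_i-\widehat X_i|)$ and $W_t^{\mathrm{apx}}=\frac{2}{t}\sqrt{U_t(\ell_{\alpha,t}+\frac12\log(2U_t))}$ with $\ell_{\alpha,t}=\log\big(\frac{\kappa Z/\alpha}{1-\exp(-U_t/4)}\big)$. *)

theory Defs
  imports "HOL-Probability.Probability"
begin

definition psiE :: "real \<Rightarrow> real" where
  "psiE x = - ln (1 - x) - x"

definition Phi :: "real \<Rightarrow> real" where
  "Phi x = measure (density lborel std_normal_density) {..x}"

definition Zk :: "real \<Rightarrow> real" where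
  "Zk \<kappa> = Phi (1/\<kappa>) - Phi (-1/\<kappa>)"

text \<open>Predictor Xhat_t = (1/2 + sum_{1<=i<t} X_i)/t, observations indexed from 1\<close>
definition Xhat :: "(nat \<Rightarrow> 'a \<Rightarrow> real) \<Rightarrow> nat \<Rightarrow> 'a \<Rightarrow> real" where
  "Xhat X t \<omega> = (1/2 + (\<Sum>i\<in>{1..<t}. X i \<omega>)) / real t"

definition Ut :: "real \<Rightarrow> (nat \<Rightarrow> 'a \<Rightarrow> real) \<Rightarrow> nat \<Rightarrow> 'a \<Rightarrow> real" where
  "Ut \<kappa> X t \<omega> = 1 / (2 * \<kappa>^2) + (\<Sum>i\<in>{1..t}. psiE \<bar>X i \<omega> - Xhat X i \<omega>\<bar>)"

definition ell :: "real \<Rightarrow> real \<Rightarrow> (nat \<Rightarrow> 'a \<Rightarrow> real) \<Rightarrow> nat \<Rightarrow> 'a \<Rightarrow> real" where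
  "ell \<kappa> \<alpha> X t \<omega> = ln ((\<kappa> * Zk \<kappa> / \<alpha>) / (1 - exp (- Ut \<kappa> X t \<omega> / 4)))"

definition Wapx :: "real \<Rightarrow> real \<Rightarrow> (nat \<Rightarrow> 'a \<Rightarrow> real) \<Rightarrow> nat \<Rightarrow> 'a \<Rightarrow> real" where
  "Wapx \<kappa> \<alpha> X t \<omega> = (2 / real t) *
     sqrt (Ut \<kappa> X t \<omega> * (ell \<kappa> \<alpha> X t \<omega> + 1/2 * ln (2 * Ut \<kappa> X t \<omega>)))"

definition Aapx :: "real \<Rightarrow> nat \<Rightarrow> real" where
  "Aapx u t = sqrt (2 * u * ln (real t) / real t)"

end

theory Submission
  imports Defs
begin

text \<open>
  Since the observations are bounded, Hoeffding's inequality and Borel--Cantelli give a strong law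
  of large numbers; hence the predictions \<open>Xhat\<close> converge to \<open>\<mu> \<in> (0,1)\<close> almost surely.
  On \<open>[0, c]\<close> with \<open>c < 1\<close> the function \<open>psiE\<close> is Lipschitz, so the increments of \<open>U\<^sub>t\<close> differ
  from \<open>psiE \<bar>X\<^sub>t - \<mu>\<bar>\<close> by a null sequence, and Cesaro averaging together with the strong law
  yields \<open>U\<^sub>t / t \<rightarrow> u > 0\<close>. In particular \<open>U\<^sub>t \<rightarrow> \<infinity>\<close>, so the logarithmic factor in \<open>W\<^sub>t\<close> equals
  \<open>log(1/\<alpha>) + (log t)/2 + O(1)\<close>; this is the stated expansion of \<open>R\<^sub>t\<^sup>2\<close> with
  \<open>\<epsilon>\<^sub>t = O(1 / log t)\<close>, and it forces \<open>R\<^sub>t \<rightarrow> 1\<close>.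
\<close>

lemma psiE_measurable [measurable]: "psiE \<in> borel_measurable borel"
  unfolding psiE_def[abs_def] by measurable

lemma psiE_nonneg:
  assumes "0 \<le> y" "y < 1"
  shows "0 \<le> psiE y"
  using ln_le_minus_one[of "1 - y"] assms by (simp add: psiE_def)

lemma psiE_pos:
  assumes "0 < y" "y < 1"
  shows "0 < psiE y"
proof -
  have "1 - y < exp (- y)"
    using exp_minus_greater[of y] assms by simp
  then have "ln (1 - y) < - y"
    using assms by (metis diff_gt_0_iff_gt ln_exp ln_less_cancel_iff exp_gt_zero)
  then show ?thesis by (simp add: psiE_def)
qed

lemma psiE_le:
  assumes "0 \<le> y" "y \<le> c" "c < 1"
  shows "psiE y \<le> 1 / (1 - c)"
proof -
  have "- ln (1 - y) = ln (1 / (1 - y))"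
    using assms by (simp add: ln_div)
  also have "\<dots> \<le> 1 / (1 - y) - 1"
    using assms by (intro ln_le_minus_one) auto
  also have "\<dots> \<le> 1 / (1 - c) - 1"
    using assms by (simp add: divide_left_mono)
  finally show ?thesis using assms by (simp add: psiE_def)
qed

lemma psiE_lipschitz:
  assumes "0 \<le> y" "y \<le> c" "0 \<le> z" "z \<le> c" "c < 1"
  shows "\<bar>psiE y - psiE z\<bar> \<le> (1 / (1 - c) + 1) * \<bar>y - z\<bar>"
proof -
  have ordered: "\<bar>psiE y - psiE z\<bar> \<le> (1 / (1 - c) + 1) * \<bar>y - z\<bar>"
    if "0 \<le> z" "z \<le> y" "y \<le> c" for y z
  proof -
    have ratio: "1 \<le> (1 - z) / (1 - y)"
      using that assms by (simp add: field_simps)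
    have "ln ((1 - z) / (1 - y)) \<le> (1 - z) / (1 - y) - 1"
      using ratio by (intro ln_le_minus_one) auto
    also have "\<dots> = (y - z) / (1 - y)"
      using that assms by (simp add: field_simps)
    also have "\<dots> \<le> (y - z) / (1 - c)"
      using that assms by (intro divide_left_mono) auto
    finally have "ln ((1 - z) / (1 - y)) \<le> (y - z) / (1 - c)" .
    moreover have "psiE y - psiE z = ln ((1 - z) / (1 - y)) - (y - z)"
      using that assms by (simp add: psiE_def ln_div)
    moreover have "(1 / (1 - c) + 1) * \<bar>y - z\<bar> = (y - z) / (1 - c) + (y - z)"
      using that assms by (simp add: field_simps)
    moreover have "0 \<le> ln ((1 - z) / (1 - y))"
      using ratio by simp
    ultimately show ?thesis
      using that by (simp add: abs_le_iff)
  qed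
  show ?thesis
    using ordered[of z y] ordered[of y z] assms
    by (cases "z \<le> y") (auto simp: abs_minus_commute)
qed

lemma psiE_abs_diff_bounds:
  assumes "x \<in> {0..1}" "0 < \<mu>" "\<mu> < 1"
  shows "0 \<le> psiE \<bar>x - \<mu>\<bar> \<and> psiE \<bar>x - \<mu>\<bar> \<le> 1 / (1 - max \<mu> (1 - \<mu>))"
  using assms by (intro conjI psiE_nonneg psiE_le) (auto simp: abs_le_iff)

lemma cesaro_mean_tendsto_0:
  fixes a :: "nat \<Rightarrow> real"
  assumes "a \<longlonglongrightarrow> 0"
  shows "(\<lambda>n. (\<Sum>i\<in>{1..n}. a i) / real n) \<longlonglongrightarrow> 0"
proof (rule LIMSEQ_I)
  fix r :: real
  assume r: "0 < r"
  obtain N where N: "\<And>i. i \<ge> N \<Longrightarrow> \<bar>a i\<bar> < r / 2"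
    using LIMSEQ_D[OF assms, of "r / 2"] r by auto
  define B where "B = (\<Sum>i\<in>{1..N}. \<bar>a i\<bar>)"
  have "\<bar>(\<Sum>i\<in>{1..n}. a i) / real n\<bar> < r" if n: "n > max N (nat \<lceil>2 * B / r\<rceil>)" for n
  proof -
    have "\<bar>\<Sum>i\<in>{1..n}. a i\<bar> \<le> (\<Sum>i\<in>{1..n}. \<bar>a i\<bar>)"
      by (rule sum_abs)
    also have "\<dots> = B + (\<Sum>i\<in>{N<..n}. \<bar>a i\<bar>)"
    proof -
      have split: "{1..n} = {1..N} \<union> {N<..n}" using n by auto
      show ?thesis unfolding split B_def by (subst sum.union_disjoint) auto
    qed
    also have "(\<Sum>i\<in>{N<..n}. \<bar>a i\<bar>) \<le> real (card {N<..n}) * (r / 2)"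
      using N by (intro sum_bounded_above) (auto intro: less_imp_le)
    also have "\<dots> \<le> real n * (r / 2)"
      using r by (intro mult_right_mono) auto
    also have "B < real n * (r / 2)"
    proof -
      have "2 * B / r \<le> real (nat \<lceil>2 * B / r\<rceil>)" by linarith
      also have "\<dots> < real n" using n by simp
      finally show ?thesis using r by (simp add: field_simps)
    qed
    finally have "\<bar>\<Sum>i\<in>{1..n}. a i\<bar> < real n * r" by linarith
    then show ?thesis using n by (simp add: field_simps)
  qed
  then show "\<exists>n0. \<forall>n\<ge>n0. norm ((\<Sum>i\<in>{1..n}. a i) / real n - 0) < r"
    by (metis Suc_le_eq norm_of_real diff_zero real_norm_def)
qed

lemma Xhat_tendsto:
  assumes "(\<lambda>n. (\<Sum>i\<in>{1..n}. X i \<omega>) / real n) \<longlonglongrightarrow> \<mu>"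
  shows "(\<lambda>t. Xhat X t \<omega>) \<longlonglongrightarrow> \<mu>"
proof -
  have shift: "Xhat X (Suc n) \<omega> = (1/2) / real (Suc n)
      + (\<Sum>i\<in>{1..n}. X i \<omega>) / real n * (real n / real (Suc n))" for n
  proof (cases "n = 0")
    case False
    have "{1..<Suc n} = {1..n}" by auto
    then show ?thesis using False by (simp add: Xhat_def add_divide_distrib)
  qed (simp add: Xhat_def)
  have "(\<lambda>n. Xhat X (Suc n) \<omega>) \<longlonglongrightarrow> 0 + \<mu> * 1"
    unfolding shift
    by (intro tendsto_intros assms LIMSEQ_n_over_Suc_n tendsto_divide_0[OF tendsto_const]
          filterlim_at_top_imp_at_infinity filterlim_compose[OF filterlim_real_sequentially]
          filterlim_Suc)
  then show ?thesis by (simp add: LIMSEQ_imp_Suc)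
qed

lemma Xhat_in_open_unit_interval:
  assumes "\<And>i. i \<ge> 1 \<Longrightarrow> X i \<omega> \<in> {0..1}" "t \<ge> 1"
  shows "Xhat X t \<omega> \<in> {0<..<1}"
proof -
  have "0 \<le> (\<Sum>i\<in>{1..<t}. X i \<omega>)"
    using assms by (intro sum_nonneg) auto
  moreover have "(\<Sum>i\<in>{1..<t}. X i \<omega>) \<le> real (card {1..<t}) * 1"
    using assms by (intro sum_bounded_above) auto
  ultimately show ?thesis using assms by (simp add: Xhat_def field_simps)
qed

lemma Ut_pos:
  assumes "\<kappa> > 0" "\<And>i. i \<ge> 1 \<Longrightarrow> X i \<omega> \<in> {0..1}"
  shows "0 < Ut \<kappa> X t \<omega>"
proof -
  have "0 \<le> psiE \<bar>X i \<omega> - Xhat X i \<omega>\<bar>" if "i \<in> {1..t}" for i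
    using assms(2)[of i] Xhat_in_open_unit_interval[of X \<omega> i, OF assms(2)] that
    by (intro psiE_nonneg) auto
  then have "0 \<le> (\<Sum>i\<in>{1..t}. psiE \<bar>X i \<omega> - Xhat X i \<omega>\<bar>)"
    by (rule sum_nonneg)
  then show ?thesis using assms(1) by (simp add: Ut_def add_pos_nonneg)
qed

lemma psiE_prediction_error_diff_tendsto_0:
  assumes X01: "\<And>i. i \<ge> 1 \<Longrightarrow> X i \<omega> \<in> {0..1}" and "0 < \<mu>" "\<mu> < 1"
    and Xhat: "(\<lambda>t. Xhat X t \<omega>) \<longlonglongrightarrow> \<mu>"
  shows "(\<lambda>i. psiE \<bar>X i \<omega> - Xhat X i \<omega>\<bar> - psiE \<bar>X i \<omega> - \<mu>\<bar>) \<longlonglongrightarrow> 0"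
proof -
  define \<delta> where "\<delta> = min \<mu> (1 - \<mu>) / 2"
  define L where "L = 1 / \<delta> + 1"
  have \<delta>: "0 < \<delta>" "2 * \<delta> \<le> \<mu>" "2 * \<delta> \<le> 1 - \<mu>"
    using assms by (auto simp: \<delta>_def)
  have "eventually (\<lambda>i. \<bar>Xhat X i \<omega> - \<mu>\<bar> < \<delta> \<and> i \<ge> 1) sequentially"
    using tendstoD[OF Xhat \<delta>(1)] eventually_ge_at_top[of "1::nat"]
    by eventually_elim (simp add: dist_real_def)
  then have "eventually (\<lambda>i. norm (psiE \<bar>X i \<omega> - Xhat X i \<omega>\<bar> - psiE \<bar>X i \<omega> - \<mu>\<bar>)
      \<le> L * \<bar>Xhat X i \<omega> - \<mu>\<bar>) sequentially"
  proof eventually_elim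
    case (elim i)
    have "\<bar>psiE \<bar>X i \<omega> - Xhat X i \<omega>\<bar> - psiE \<bar>X i \<omega> - \<mu>\<bar>\<bar>
        \<le> L * \<bar>\<bar>X i \<omega> - Xhat X i \<omega>\<bar> - \<bar>X i \<omega> - \<mu>\<bar>\<bar>"
      unfolding L_def using X01[of i] elim \<delta>
      by (intro psiE_lipschitz[of _ "1 - \<delta>", simplified]) (auto simp: abs_le_iff abs_less_iff)
    also have "\<dots> \<le> L * \<bar>Xhat X i \<omega> - \<mu>\<bar>"
      using \<delta> by (intro mult_left_mono) (auto simp: L_def)
    finally show ?case by simp
  qed
  moreover have "(\<lambda>i. L * \<bar>Xhat X i \<omega> - \<mu>\<bar>) \<longlonglongrightarrow> L * \<bar>\<mu> - \<mu>\<bar>"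
    by (intro tendsto_intros Xhat)
  ultimately show ?thesis by (simp add: Lim_null_comparison)
qed

lemma Ut_over_t_tendsto:
  assumes "\<And>i. i \<ge> 1 \<Longrightarrow> X i \<omega> \<in> {0..1}" "0 < \<mu>" "\<mu> < 1"
    and "(\<lambda>n. (\<Sum>i\<in>{1..n}. X i \<omega>) / real n) \<longlonglongrightarrow> \<mu>"
    and "(\<lambda>n. (\<Sum>i\<in>{1..n}. psiE \<bar>X i \<omega> - \<mu>\<bar>) / real n) \<longlonglongrightarrow> u"
  shows "(\<lambda>t. Ut \<kappa> X t \<omega> / real t) \<longlonglongrightarrow> u"
proof -
  define d where "d i = psiE \<bar>X i \<omega> - Xhat X i \<omega>\<bar> - psiE \<bar>X i \<omega> - \<mu>\<bar>" for i
  have split: "Ut \<kappa> X t \<omega> / real t = (1 / (2 * \<kappa>\<^sup>2)) / real t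
      + (\<Sum>i\<in>{1..t}. psiE \<bar>X i \<omega> - \<mu>\<bar>) / real t + (\<Sum>i\<in>{1..t}. d i) / real t" for t
    by (simp add: Ut_def d_def sum_subtractf add_divide_distrib diff_divide_distrib)
  have "(\<lambda>t. (1 / (2 * \<kappa>\<^sup>2)) / real t + (\<Sum>i\<in>{1..t}. psiE \<bar>X i \<omega> - \<mu>\<bar>) / real t
      + (\<Sum>i\<in>{1..t}. d i) / real t) \<longlonglongrightarrow> 0 + u + 0"
    unfolding d_def
    by (intro tendsto_add assms(5) cesaro_mean_tendsto_0 psiE_prediction_error_diff_tendsto_0
          Xhat_tendsto assms(1-4) tendsto_divide_0[OF tendsto_const]
          filterlim_at_top_imp_at_infinity filterlim_real_sequentially)
  then show ?thesis
    unfolding split by simp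
qed

definition apx_log_term :: "real \<Rightarrow> real \<Rightarrow> real \<Rightarrow> real" where
  "apx_log_term K \<alpha> U = ln (K / \<alpha> / (1 - exp (- U / 4))) + 1/2 * ln (2 * U)"

lemma Wapx_eq:
  "Wapx \<kappa> \<alpha> X t \<omega> = 2 / real t * sqrt (Ut \<kappa> X t \<omega> * apx_log_term (\<kappa> * Zk \<kappa>) \<alpha> (Ut \<kappa> X t \<omega>))"
  by (simp add: Wapx_def ell_def apx_log_term_def)

lemma apx_log_term_split:
  assumes "0 < K" "0 < \<alpha>" "0 < U" "0 < s"
  shows "apx_log_term K \<alpha> U
    = ln (1 / \<alpha>) + 1/2 * ln s + (ln K - ln (1 - exp (- U / 4)) + 1/2 * ln (2 * (U / s)))"
proof -
  have "exp (- U / 4) < 1" using assms(3) by simp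
  then have "ln (K / \<alpha> / (1 - exp (- U / 4))) = ln (1 / \<alpha>) + ln K - ln (1 - exp (- U / 4))"
    using assms by (simp add: ln_div ln_mult)
  moreover have "ln (2 * U) = ln s + ln (2 * (U / s))"
    using assms by (simp add: ln_mult ln_div)
  ultimately show ?thesis by (simp add: apx_log_term_def algebra_simps)
qed

lemma filterlim_at_top_if_ratio_tendsto_pos:
  fixes U :: "nat \<Rightarrow> real"
  assumes "(\<lambda>t. U t / real t) \<longlonglongrightarrow> u" "0 < u"
  shows "filterlim U at_top sequentially"
proof -
  have "filterlim (\<lambda>t. U t / real t * real t) at_top sequentially"
    by (rule filterlim_tendsto_pos_mult_at_top[OF assms filterlim_real_sequentially])
  moreover have "eventually (\<lambda>t. U t / real t * real t = U t) sequentially"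
    using eventually_ge_at_top[of "1::nat"] by eventually_elim auto
  ultimately show ?thesis by (simp add: filterlim_cong)
qed

lemma apx_log_term_asymptotics:
  fixes U :: "nat \<Rightarrow> real"
  assumes "0 < K" "0 < \<alpha>" "\<And>t. 0 < U t" "(\<lambda>t. U t / real t) \<longlonglongrightarrow> u" "0 < u"
  shows "(\<lambda>t. (apx_log_term K \<alpha> (U t) - ln (1 / \<alpha>)) / ln (real t) - 1/2) \<longlonglongrightarrow> 0"
proof -
  define H where "H t = ln K - ln (1 - exp (- U t / 4)) + 1/2 * ln (2 * (U t / real t))" for t
  have "filterlim (\<lambda>t. 1/4 * U t) at_top sequentially"
    using filterlim_at_top_if_ratio_tendsto_pos[OF assms(4,5)]
    by (intro filterlim_tendsto_pos_mult_at_top[OF tendsto_const]) auto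
  then have "(\<lambda>t. exp (- U t / 4)) \<longlonglongrightarrow> 0"
    by (intro filterlim_compose[OF exp_at_bot]) (simp add: filterlim_uminus_at_top)
  then have "H \<longlonglongrightarrow> ln K - ln (1 - 0) + 1/2 * ln (2 * u)"
    unfolding H_def using assms(5) by (intro tendsto_intros assms(4)) auto
  then have "(\<lambda>t. H t / ln (real t)) \<longlonglongrightarrow> 0"
    by (intro tendsto_divide_0 filterlim_at_top_imp_at_infinity
          filterlim_compose[OF ln_at_top filterlim_real_sequentially])
  moreover have "eventually (\<lambda>t. H t / ln (real t)
      = (apx_log_term K \<alpha> (U t) - ln (1 / \<alpha>)) / ln (real t) - 1/2) sequentially"
    using eventually_ge_at_top[of "2::nat"]
  proof eventually_elim
    case (elim t)
    then have "0 < ln (real t)" by simp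
    then show ?case
      using apx_log_term_split[OF assms(1,2,3), of "real t" t] elim
      by (simp add: H_def field_simps)
  qed
  ultimately show ?thesis by (rule Lim_transform_eventually)
qed

lemma apx_ratio_square:
  assumes "2 \<le> t" "0 < u" "0 \<le> U" "0 \<le> G"
  shows "(2 / real t * sqrt (U * G) / Aapx u t)\<^sup>2 = 2 * U * G / (real t * u * ln (real t))"
proof -
  have "0 < ln (real t)" using assms(1) by simp
  then show ?thesis
    using assms by (simp add: Aapx_def power_divide power_mult_distrib field_simps power2_eq_square)
qed

lemma apx_ratio_square_eventually:
  fixes U :: "nat \<Rightarrow> real"
  assumes "0 < K" "0 < \<alpha>" "\<alpha> < 1" "0 < u" "\<And>t. 0 < U t" "(\<lambda>t. U t / real t) \<longlonglongrightarrow> u"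
  defines "R t \<equiv> 2 / real t * sqrt (U t * apx_log_term K \<alpha> (U t)) / Aapx u t"
  shows "eventually (\<lambda>t. 0 \<le> R t \<and>
    (R t)\<^sup>2 = 2 * U t * apx_log_term K \<alpha> (U t) / (real t * u * ln (real t))) sequentially"
proof -
  define G where "G t = apx_log_term K \<alpha> (U t)" for t
  have "(\<lambda>t. (G t - ln (1 / \<alpha>)) / ln (real t) - 1/2) \<longlonglongrightarrow> 0"
    unfolding G_def using assms(1,2,5,6,4) by (rule apx_log_term_asymptotics)
  from tendstoD[OF this half_gt_zero[OF zero_less_one]] eventually_ge_at_top[of "2::nat"]
  show ?thesis
  proof eventually_elim
    case (elim t)
    then have "0 < (G t - ln (1 / \<alpha>)) / ln (real t)"
      unfolding dist_real_def by linarith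
    moreover have "0 < ln (real t)" "0 < ln (1 / \<alpha>)"
      using elim assms(2,3) by simp_all
    ultimately have "0 < G t"
      by (simp add: zero_less_divide_iff)
    then have "0 \<le> R t"
      unfolding R_def G_def[symmetric] Aapx_def using elim assms(4) assms(5)[of t]
      by (intro divide_nonneg_nonneg mult_nonneg_nonneg) auto
    moreover have "(R t)\<^sup>2 = 2 * U t * G t / (real t * u * ln (real t))"
      unfolding R_def G_def using \<open>0 < G t\<close> elim assms(4) assms(5)[of t]
      by (intro apx_ratio_square) (auto simp: G_def)
    ultimately show ?case by (simp add: G_def)
  qed
qed

lemma apx_ratio_asymptotics:
  fixes U :: "nat \<Rightarrow> real"
  assumes "0 < K" "0 < \<alpha>" "\<alpha> < 1" "0 < u" "\<And>t. 0 < U t" "(\<lambda>t. U t / real t) \<longlonglongrightarrow> u"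
  defines "R t \<equiv> 2 / real t * sqrt (U t * apx_log_term K \<alpha> (U t)) / Aapx u t"
  shows "R \<longlonglongrightarrow> 1 \<and>
    (\<exists>\<epsilon> :: nat \<Rightarrow> real.
      (\<forall>t\<ge>2. (R t)\<^sup>2 = 2 * U t / (real t * u) * (ln (1/\<alpha>) / ln (real t) + 1/2 + \<epsilon> t)) \<and>
      \<epsilon> \<longlonglongrightarrow> 0)"
proof -
  \<comment> \<open>Solving the expansion for \<open>\<epsilon>\<close> makes it hold for all \<open>t \<ge> 2\<close>, also where the radicand
    in \<open>R t\<close> is negative (there \<open>sqrt\<close> is odd, so \<open>(R t)\<^sup>2\<close> is not the quotient of the radicands).\<close>
  define \<epsilon> where "\<epsilon> t = (R t)\<^sup>2 * (real t * u) / (2 * U t) - ln (1/\<alpha>) / ln (real t) - 1/2" for t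
  have expansion: "(R t)\<^sup>2 = 2 * U t / (real t * u) * (ln (1/\<alpha>) / ln (real t) + 1/2 + \<epsilon> t)"
    if "t \<ge> 2" for t
    using that assms(4) assms(5)[of t] by (simp add: \<epsilon>_def field_simps)
  note R_eventually = apx_ratio_square_eventually[OF assms(1-6), folded R_def]
  have "eventually (\<lambda>t. (apx_log_term K \<alpha> (U t) - ln (1 / \<alpha>)) / ln (real t) - 1/2 = \<epsilon> t)
      sequentially"
    using R_eventually eventually_ge_at_top[of "2::nat"]
  proof eventually_elim
    case (elim t)
    have "U t \<noteq> 0" using assms(5)[of t] by simp
    with elim assms(4) show ?case by (simp add: \<epsilon>_def field_simps)
  qed
  with apx_log_term_asymptotics[OF assms(1,2,5,6,4)] have \<epsilon>: "\<epsilon> \<longlonglongrightarrow> 0"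
    by (rule Lim_transform_eventually)
  have "(\<lambda>t. 2 * (U t / real t) / u * (ln (1/\<alpha>) / ln (real t) + 1/2 + \<epsilon> t))
      \<longlonglongrightarrow> 2 * u / u * (0 + 1/2 + 0)"
    by (intro tendsto_intros assms(6) \<epsilon> tendsto_divide_0[OF tendsto_const]
          filterlim_at_top_imp_at_infinity filterlim_compose[OF ln_at_top filterlim_real_sequentially])
      (use assms(4) in auto)
  moreover have "eventually (\<lambda>t. 2 * (U t / real t) / u * (ln (1/\<alpha>) / ln (real t) + 1/2 + \<epsilon> t)
      = (R t)\<^sup>2) sequentially"
    using eventually_ge_at_top[of "2::nat"] by eventually_elim (simp add: expansion)
  ultimately have "(\<lambda>t. sqrt ((R t)\<^sup>2)) \<longlonglongrightarrow> sqrt 1"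
    using assms(4) by (intro tendsto_intros) (simp add: Lim_transform_eventually)
  moreover have "eventually (\<lambda>t. sqrt ((R t)\<^sup>2) = R t) sequentially"
    using R_eventually by eventually_elim (metis real_sqrt_abs abs_of_nonneg)
  ultimately have "R \<longlonglongrightarrow> 1"
    by (simp add: Lim_transform_eventually)
  with expansion \<epsilon> show ?thesis by blast
qed

lemma (in prob_space) AE_tendsto_if_summable_deviation_probs:
  fixes Y :: "nat \<Rightarrow> 'a \<Rightarrow> real"
  assumes "\<And>n. Y n \<in> borel_measurable M"
    and "\<And>\<epsilon>. 0 < \<epsilon> \<Longrightarrow> summable (\<lambda>n. prob {\<omega>\<in>space M. \<epsilon> \<le> \<bar>Y n \<omega> - m\<bar>})"
  shows "AE \<omega> in M. (\<lambda>n. Y n \<omega>) \<longlonglongrightarrow> m"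
proof -
  have "AE \<omega> in M. eventually (\<lambda>n. \<bar>Y n \<omega> - m\<bar> < 1 / real (Suc k)) sequentially" for k
  proof -
    define A where "A n = {\<omega>\<in>space M. 1 / real (Suc k) \<le> \<bar>Y n \<omega> - m\<bar>}" for n
    have "A n \<in> sets M" for n
      unfolding A_def using assms(1)[of n] by measurable
    then have "AE \<omega> in M. eventually (\<lambda>n. \<omega> \<in> space M - A n) sequentially"
      using assms(2)[of "1 / real (Suc k)"]
      by (intro borel_cantelli_AE1) (auto simp: A_def emeasure_eq_measure)
    then show ?thesis
      by (rule AE_mp) (auto intro!: AE_I2 elim!: eventually_mono simp: A_def not_le)
  qed
  then have "AE \<omega> in M. \<forall>k. eventually (\<lambda>n. \<bar>Y n \<omega> - m\<bar> < 1 / real (Suc k)) sequentially"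
    by (simp add: AE_all_countable)
  then show ?thesis
  proof (rule AE_mp, intro AE_I2 impI tendstoI)
    fix \<omega> and r :: real
    assume close: "\<forall>k. eventually (\<lambda>n. \<bar>Y n \<omega> - m\<bar> < 1 / real (Suc k)) sequentially"
      and "0 < r"
    then obtain k where k: "1 / real (Suc k) < r"
      using reals_Archimedean by (auto simp: inverse_eq_divide)
    from close have "eventually (\<lambda>n. \<bar>Y n \<omega> - m\<bar> < 1 / real (Suc k)) sequentially" ..
    then show "eventually (\<lambda>n. dist (Y n \<omega>) m < r) sequentially"
      by (rule eventually_mono) (use k in \<open>simp add: dist_real_def\<close>)
  qed
qed

lemma (in prob_space) hoeffding_bounded_iid:
  fixes X :: "nat \<Rightarrow> 'a \<Rightarrow> real" and P :: "real measure" and g :: "real \<Rightarrow> real"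
  assumes X [measurable]: "\<And>t. t \<ge> 1 \<Longrightarrow> X t \<in> borel_measurable M"
    and indep: "indep_vars (\<lambda>_. borel) X {1..}"
    and law: "\<And>t. t \<ge> 1 \<Longrightarrow> distr M borel (X t) = P"
    and g [measurable]: "g \<in> borel_measurable borel"
    and bounded: "AE x in P. g x \<in> {a..b}" and "a < b" and "0 \<le> \<epsilon>" and "n \<ge> 1"
  shows "prob {\<omega>\<in>space M. \<epsilon> \<le> \<bar>(\<Sum>i\<in>{1..n}. g (X i \<omega>)) / real n - integral\<^sup>L P g\<bar>}
    \<le> 2 * exp (-2 * real n * \<epsilon>\<^sup>2 / (b - a)\<^sup>2)"
proof -
  have X1 [measurable]: "X 1 \<in> borel_measurable M" by simp
  interpret Hoeffding_ineq_iid M "{1..n}" "\<lambda>i \<omega>. g (X i \<omega>)" "\<lambda>\<omega>. g (X 1 \<omega>)" a b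
    "integral\<^sup>L P g"
  proof unfold_locales
    show "indep_vars (\<lambda>_. borel) (\<lambda>i \<omega>. g (X i \<omega>)) {1..n}"
      by (rule indep_vars_compose2[OF indep_vars_subset[OF indep]]) auto
    show "distr M borel (\<lambda>\<omega>. g (X i \<omega>)) = distr M borel (\<lambda>\<omega>. g (X 1 \<omega>))" if "i \<in> {1..n}" for i
      using distr_distr[of g borel borel "X i" M] distr_distr[of g borel borel "X 1" M] that
      by (simp add: law o_def)
    have "AE x in distr M borel (X 1). g x \<in> {a..b}"
      unfolding law[OF order_refl] by (rule bounded)
    then show "AE \<omega> in M. g (X 1 \<omega>) \<in> {a..b}"
      by (subst (asm) AE_distr_iff) auto
    have "expectation (\<lambda>\<omega>. g (X 1 \<omega>)) = integral\<^sup>L P g"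
      using integral_distr[OF X1 g] by (simp add: law)
    then show "integral\<^sup>L P g \<equiv> expectation (\<lambda>\<omega>. g (X 1 \<omega>))"
      by simp
  qed simp_all
  show ?thesis
    using Hoeffding_ineq_abs_ge' assms(6-8) by simp
qed

lemma (in prob_space) strong_law_bounded_iid:
  fixes X :: "nat \<Rightarrow> 'a \<Rightarrow> real" and P :: "real measure" and g :: "real \<Rightarrow> real"
  assumes X [measurable]: "\<And>t. t \<ge> 1 \<Longrightarrow> X t \<in> borel_measurable M"
    and "indep_vars (\<lambda>_. borel) X {1..}"
    and "\<And>t. t \<ge> 1 \<Longrightarrow> distr M borel (X t) = P"
    and g [measurable]: "g \<in> borel_measurable borel"
    and "AE x in P. g x \<in> {a..b}" and "a < b"
  shows "AE \<omega> in M. (\<lambda>n. (\<Sum>i\<in>{1..n}. g (X i \<omega>)) / real n) \<longlonglongrightarrow> integral\<^sup>L P g"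
proof (rule AE_tendsto_if_summable_deviation_probs)
  show "(\<lambda>\<omega>. (\<Sum>i\<in>{1..n}. g (X i \<omega>)) / real n) \<in> borel_measurable M" for n
    by (intro borel_measurable_divide borel_measurable_sum) auto
  fix \<epsilon> :: real
  assume "0 < \<epsilon>"
  define q where "q = exp (-2 * \<epsilon>\<^sup>2 / (b - a)\<^sup>2)"
  have "exp (-2 * real n * \<epsilon>\<^sup>2 / (b - a)\<^sup>2) = q ^ n" for n
    unfolding q_def by (subst exp_of_nat_mult[symmetric]) (simp add: field_simps)
  then have "norm (prob {\<omega>\<in>space M. \<epsilon> \<le> \<bar>(\<Sum>i\<in>{1..n}. g (X i \<omega>)) / real n - integral\<^sup>L P g\<bar>})
      \<le> 2 * q ^ n" if "n \<ge> 1" for n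
    using hoeffding_bounded_iid[OF assms, of \<epsilon> n] \<open>0 < \<epsilon>\<close> that by simp
  moreover have "summable (\<lambda>n. 2 * q ^ n)"
    using \<open>0 < \<epsilon>\<close> \<open>a < b\<close> by (intro summable_mult summable_geometric) (simp add: q_def)
  ultimately show "summable (\<lambda>n. prob {\<omega>\<in>space M. \<epsilon> \<le> \<bar>(\<Sum>i\<in>{1..n}. g (X i \<omega>)) / real n - integral\<^sup>L P g\<bar>})"
    by (rule summable_comparison_test'[rotated])
qed

lemma (in prob_space) integral_pos_if_zero_only_at:
  fixes f :: "'a \<Rightarrow> real"
  assumes "integrable M f" "AE x in M. 0 \<le> f x" "AE x in M. f x = 0 \<longrightarrow> x = c"
    and "{c} \<in> sets M" "prob {c} < 1"
  shows "0 < integral\<^sup>L M f"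
proof (rule ccontr)
  assume "\<not> 0 < integral\<^sup>L M f"
  moreover have "0 \<le> integral\<^sup>L M f"
    using assms(2) by (rule integral_nonneg_AE)
  ultimately have "integral\<^sup>L M f = 0" by simp
  with assms(1,2) have "AE x in M. f x = 0"
    by (simp add: integral_nonneg_eq_0_iff_AE)
  with assms(3) have "AE x in M. x \<in> {c}"
    by eventually_elim simp
  with assms(4) have "prob {c} = 1"
    by (rule prob_eq_1[THEN iffD2])
  with assms(5) show False by simp
qed

lemma mean_in_open_unit_interval:
  fixes P :: "real measure"
  assumes "prob_space P" and sets: "sets P = sets borel" and unit: "AE x in P. x \<in> {0..1}"
    and nondegenerate: "\<And>c. measure P {c} < 1"
  shows "0 < (\<integral>x. x \<partial>P) \<and> (\<integral>x. x \<partial>P) < 1"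
proof -
  interpret prob_space P by fact
  have integrable: "integrable P (\<lambda>x. x)" "integrable P (\<lambda>x. 1 - x)"
    using unit by (auto intro!: integrable_const_bound[where B = 1] elim: AE_mp
          simp: measurable_cong_sets[OF sets refl])
  have "0 < (\<integral>x. x \<partial>P)"
    using unit sets nondegenerate
    by (intro integral_pos_if_zero_only_at[where c = 0] integrable) auto
  moreover have "0 < (\<integral>x. 1 - x \<partial>P)"
    using unit sets nondegenerate
    by (intro integral_pos_if_zero_only_at[where c = 1] integrable) auto
  ultimately show ?thesis
    using integrable by (simp add: prob_space)
qed

lemma psiE_dispersion_pos:
  fixes P :: "real measure"
  assumes "prob_space P" and sets: "sets P = sets borel" and unit: "AE x in P. x \<in> {0..1}"
    and nondegenerate: "\<And>c. measure P {c} < 1" and "0 < \<mu>" "\<mu> < 1"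
  shows "0 < (\<integral>x. psiE \<bar>x - \<mu>\<bar> \<partial>P)"
proof -
  interpret prob_space P by fact
  have bounds: "AE x in P. 0 \<le> psiE \<bar>x - \<mu>\<bar> \<and> psiE \<bar>x - \<mu>\<bar> \<le> 1 / (1 - max \<mu> (1 - \<mu>))"
    using unit by eventually_elim (use psiE_abs_diff_bounds \<open>0 < \<mu>\<close> \<open>\<mu> < 1\<close> in blast)
  show ?thesis
  proof (rule integral_pos_if_zero_only_at[where c = \<mu>])
    show "integrable P (\<lambda>x. psiE \<bar>x - \<mu>\<bar>)"
      using bounds by (intro integrable_const_bound[where B = "1 / (1 - max \<mu> (1 - \<mu>))"])
        (auto elim: AE_mp simp: measurable_cong_sets[OF sets refl])
    show "AE x in P. 0 \<le> psiE \<bar>x - \<mu>\<bar>"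
      using bounds by eventually_elim simp
    show "AE x in P. psiE \<bar>x - \<mu>\<bar> = 0 \<longrightarrow> x = \<mu>"
      using unit
    proof eventually_elim
      case (elim x)
      then have "\<bar>x - \<mu>\<bar> < 1" using \<open>0 < \<mu>\<close> \<open>\<mu> < 1\<close> by auto
      then show ?case using psiE_pos[of "\<bar>x - \<mu>\<bar>"] by fastforce
    qed
  qed (use sets nondegenerate in auto)
qed


lemma Zk_pos:
  assumes "0 < \<kappa>"
  shows "0 < Zk \<kappa>"
proof -
  define N where "N = density lborel (\<lambda>x. ennreal (std_normal_density x))"
  interpret N: prob_space N
    unfolding N_def by (rule prob_space_normal_density) simp
  define b where "b = 1 / \<kappa>"
  have b: "0 < b" using assms by (simp add: b_def)
  have "Zk \<kappa> = measure N {..b} - measure N {..-b}"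
    by (simp add: Zk_def Phi_def N_def b_def)
  also have "\<dots> = measure N ({..b} - {..-b})"
    using b by (intro N.finite_measure_Diff[symmetric]) (auto simp: N_def)
  also have "{..b} - {..-b} = {-b<..b}" by auto
  finally have Zk_eq: "Zk \<kappa> = measure N {-b<..b}" .
  have density_lower: "std_normal_density b \<le> std_normal_density x" if "x \<in> {-b<..b}" for x
  proof -
    have "x\<^sup>2 \<le> b\<^sup>2" using that b by (intro power2_le_iff_abs_le[THEN iffD2]) auto
    then show ?thesis by (simp add: normal_density_def divide_right_mono)
  qed
  have "ennreal (std_normal_density b * (2 * b))
      = (\<integral>\<^sup>+x. ennreal (std_normal_density b) * indicator {-b<..b} x \<partial>lborel)"
    using b by (simp add: nn_integral_cmult ennreal_mult normal_density_nonneg)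
  also have "\<dots> \<le> (\<integral>\<^sup>+x. ennreal (std_normal_density x) * indicator {-b<..b} x \<partial>lborel)"
    by (intro nn_integral_mono) (auto simp: density_lower split: split_indicator)
  also have "\<dots> = ennreal (measure N {-b<..b})"
    unfolding N_def by (subst emeasure_density[symmetric]) (auto simp: N.emeasure_eq_measure[unfolded N_def])
  finally have "std_normal_density b * (2 * b) \<le> measure N {-b<..b}"
    by (subst (asm) ennreal_le_iff) auto
  moreover have "0 < std_normal_density b * (2 * b)"
    using b by (simp add: normal_density_pos)
  ultimately show ?thesis unfolding Zk_eq by linarith
qed
lemma (in prob_space) AE_all_of_common_law:
  fixes X :: "nat \<Rightarrow> 'a \<Rightarrow> real"
  assumes "\<And>t. t \<ge> 1 \<Longrightarrow> X t \<in> borel_measurable M" "\<And>t. t \<ge> 1 \<Longrightarrow> distr M borel (X t) = P"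
    and "AE x in P. Q x" "Measurable.pred borel Q"
  shows "AE \<omega> in M. \<forall>t\<ge>1. Q (X t \<omega>)"
proof -
  have each: "AE \<omega> in M. Q (X t \<omega>)" if "t \<ge> 1" for t
  proof -
    have "AE x in distr M borel (X t). Q x"
      unfolding assms(2)[OF that] by (rule assms(3))
    then show ?thesis
      using assms(1)[OF that] assms(4) by (subst (asm) AE_distr_iff) auto
  qed
  show ?thesis
    unfolding AE_all_countable by (intro allI AE_impI each)
qed

lemma Wapx_over_Aapx_asymptotics:
  assumes "0 < \<kappa>" "0 < \<alpha>" "\<alpha> < 1" "0 < u" "\<forall>t\<ge>1. X t \<omega> \<in> {0..1}"
    and "(\<lambda>t. Ut \<kappa> X t \<omega> / real t) \<longlonglongrightarrow> u"
  shows "((\<lambda>t. Wapx \<kappa> \<alpha> X t \<omega> / Aapx u t) \<longlonglongrightarrow> 1) \<and>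
    (\<exists>\<epsilon> :: nat \<Rightarrow> real.
      (\<forall>t\<ge>2. (Wapx \<kappa> \<alpha> X t \<omega> / Aapx u t)\<^sup>2 =
        2 * Ut \<kappa> X t \<omega> / (real t * u) * (ln (1/\<alpha>) / ln (real t) + 1/2 + \<epsilon> t)) \<and>
      \<epsilon> \<longlonglongrightarrow> 0)"
  unfolding Wapx_eq using assms Zk_pos[OF assms(1)]
  by (intro apx_ratio_asymptotics Ut_pos) auto

theorem mainTheorem5:
  fixes M :: "'a measure" and P :: "real measure" and X :: "nat \<Rightarrow> 'a \<Rightarrow> real"
    and \<kappa> \<alpha> \<mu> u :: real
  assumes "prob_space M"
    and "prob_space P" and "sets P = sets borel"
    and "AE x in P. x \<in> {0..1}"
    and "\<And>c. measure P {c} < 1"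
    and "\<And>t. t \<ge> 1 \<Longrightarrow> X t \<in> borel_measurable M"
    and "prob_space.indep_vars M (\<lambda>_. borel) X {1..}"
    and "\<And>t. t \<ge> 1 \<Longrightarrow> distr M borel (X t) = P"
    and "\<mu> = (\<integral>x. x \<partial>P)"
    and "\<kappa> > 0" and "0 < \<alpha>" and "\<alpha> < 1"
    and "u = (\<integral>x. psiE \<bar>x - \<mu>\<bar> \<partial>P)"
  shows "0 < u \<and>
    (AE \<omega> in M.
       ((\<lambda>t. Wapx \<kappa> \<alpha> X t \<omega> / Aapx u t) \<longlonglongrightarrow> 1) \<and>
       (\<exists>\<epsilon> :: nat \<Rightarrow> real.
          (\<forall>t\<ge>2. (Wapx \<kappa> \<alpha> X t \<omega> / Aapx u t)\<^sup>2 =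
             2 * Ut \<kappa> X t \<omega> / (real t * u) *
               (ln (1/\<alpha>) / ln (real t) + 1/2 + \<epsilon> t)) \<and>
          \<epsilon> \<longlonglongrightarrow> 0))"
proof -
  interpret M: prob_space M by fact
  have \<mu>: "0 < \<mu>" "\<mu> < 1"
    using mean_in_open_unit_interval[OF assms(2-5)] assms(9) by auto
  have "0 < u"
    using psiE_dispersion_pos[OF assms(2-5) \<mu>] assms(13) by simp
  have "AE \<omega> in M. \<forall>t\<ge>1. X t \<omega> \<in> {0..1}"
    using assms(4,6,8) by (intro M.AE_all_of_common_law) auto
  moreover have "AE \<omega> in M. (\<lambda>n. (\<Sum>i\<in>{1..n}. X i \<omega>) / real n) \<longlonglongrightarrow> \<mu>"
    using M.strong_law_bounded_iid[of X P "\<lambda>x. x" 0 1] assms(4,6-9) by auto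
  moreover have "AE \<omega> in M. (\<lambda>n. (\<Sum>i\<in>{1..n}. psiE \<bar>X i \<omega> - \<mu>\<bar>) / real n) \<longlonglongrightarrow> u"
  proof -
    have "AE x in P. psiE \<bar>x - \<mu>\<bar> \<in> {0..1 / (1 - max \<mu> (1 - \<mu>))}"
      using assms(4) by eventually_elim (use psiE_abs_diff_bounds \<mu> in auto)
    then show ?thesis
      using M.strong_law_bounded_iid[of X P "\<lambda>x. psiE \<bar>x - \<mu>\<bar>" 0] assms(6-8,13) \<mu> by auto
  qed
  ultimately have "AE \<omega> in M. (\<forall>t\<ge>1. X t \<omega> \<in> {0..1}) \<and> (\<lambda>t. Ut \<kappa> X t \<omega> / real t) \<longlonglongrightarrow> u"
    by eventually_elim (use \<mu> in \<open>auto intro: Ut_over_t_tendsto\<close>)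
  then show ?thesis
    by (intro conjI \<open>0 < u\<close>, elim eventually_mono)
      (rule Wapx_over_Aapx_asymptotics; use \<open>0 < u\<close> assms(10-12) in auto)
qed

end
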